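(* Let $\mathcal G$ be a connected rank-3 tensor Feynman graph as in the context, with $N_{\rm ext}\ge 6$ external legs. Let \[ \omega_{\deg}(\mathcal G)=-(V-1)+\tfrac12F_{\rm int}(\mathcal G). \] Then \[ \omega_{\deg}(\mathcal G)\le-\tfrac1{12}N_{\rm ext}. \]
   Context: Bubbles. Use colors $1,2,3$ for bubble edges and color $0$ for propagator lines. The tetrahedral bubble $\mathbf b_+$ is $K_4$ on $w_1,\dots,w_4$ with the following colored edges: \begin{itemize} \item $w_1w_2$ and $w_3w_4$ of color 1; \item $w_1w_3$ and $w_2w_4$ of color 2; \item $w_1w_4$ and $w_2w_3$ of color 3. \end{itemize} For $c\in\{1,2,3\}$, the melonic bubble $\mathbf b_c$ has vertices $w_1,\dots,w_4$ and the following edges: \begin{itemize} \item $w_1w_2$ doubled, carrying the two colors of $\{1,2,3\}\setminus\{c\}$; \item $w_3w_4$ doubled, carrying the two colors of $\{1,2,3\}\setminus\{c\}$; \item single edges $w_2w_3$ and $w_4w_1$ of color $c$. \end{itemize} Graphs. A graph $\mathcal G$ consists of the following data: \begin{itemize} \item $V=V_++V_m$ interaction vertices (copies of $\mathbf b_+$, resp. of some $\mathbf b_c$); \item $L$ internal color-0 lines joining bubble vertices, each bubble vertex incident to at most one line; \item a color-0 external leg at each bubble vertex not incident to a line. \end{itemize} Let $N_{\rm ext}$ be the number of external legs. The colored extension $\mathcal G_{\rm col}$ is the resulting 4-edge-colored graph. Connected means $\mathcal G_{\rm col}$ is connected. Faces. A face of color $c\in\{1,2,3\}$ is a connected component of the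 subgraph of $\mathcal G_{\rm col}$ formed by the color-0 edges and half-edges and the color-$c$ edges. It is internal if it is a cycle, and external if it is a path between two external legs. $F_{\rm int}(\mathcal G)$ is the number of internal faces. *)

theory Defs
  imports Complex_Main
begin

datatype bubble = Tetra | Melo nat

definition valid_bubble :: "bubble \<Rightarrow> bool" where
  "valid_bubble b = (case b of Tetra \<Rightarrow> True | Melo c \<Rightarrow> c \<in> {1,2,3})"

text \<open>Colored edges of a bubble, as triples (endpoint, endpoint, color); vertices w1..w4 are 1..4.\<close>
definition bubble_edges :: "bubble \<Rightarrow> (nat \<times> nat \<times> nat) set" where
  "bubble_edges b = (case b of
      Tetra \<Rightarrow> {(1,2,1),(3,4,1),(1,3,2),(2,4,2),(1,4,3),(2,3,3)}
    | Melo c \<Rightarrow> {(1,2,d) | d. d \<in> {1,2,3} - {c}} \<union> {(3,4,d) | d. d \<in> {1,2,3} - {c}}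
               \<union> {(2,3,c),(4,1,c)})"

text \<open>A graph: V bubbles indexed 0..<V with types bt; bubble vertices are pairs (i,k),
  i<V, k\<in>{1..4}; lns is the partial involution describing the color-0 lines.\<close>
definition verts :: "nat \<Rightarrow> (nat \<times> nat) set" where
  "verts V = {(i,k). i < V \<and> k \<in> {1..4}}"

definition wf_graph :: "nat \<Rightarrow> (nat \<Rightarrow> bubble) \<Rightarrow> (nat \<times> nat \<Rightarrow> (nat \<times> nat) option) \<Rightarrow> bool" where
  "wf_graph V bt lns \<longleftrightarrow>
     (\<forall>i<V. valid_bubble (bt i)) \<and>
     (\<forall>v w. lns v = Some w \<longrightarrow> v \<in> verts V \<and> w \<in> verts V \<and> w \<noteq> v \<and> lns w = Some v)"

definition ext_legs :: "nat \<Rightarrow> (nat \<times> nat \<Rightarrow> (nat \<times> nat) option) \<Rightarrow> (nat \<times> nat) set" where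
  "ext_legs V lns = {v \<in> verts V. lns v = None}"

definition N_ext :: "nat \<Rightarrow> (nat \<times> nat \<Rightarrow> (nat \<times> nat) option) \<Rightarrow> nat" where
  "N_ext V lns = card (ext_legs V lns)"

definition face_adj :: "nat \<Rightarrow> (nat \<Rightarrow> bubble) \<Rightarrow> (nat \<times> nat \<Rightarrow> (nat \<times> nat) option) \<Rightarrow> nat
    \<Rightarrow> nat \<times> nat \<Rightarrow> nat \<times> nat \<Rightarrow> bool" where
  "face_adj V bt lns c u v \<longleftrightarrow> u \<in> verts V \<and> v \<in> verts V \<and>
     ((fst u = fst v \<and> ((snd u, snd v, c) \<in> bubble_edges (bt (fst u))
                        \<or> (snd v, snd u, c) \<in> bubble_edges (bt (fst u))))
      \<or> lns u = Some v)"

definition faces :: "nat \<Rightarrow> (nat \<Rightarrow> bubble) \<Rightarrow> (nat \<times> nat \<Rightarrow> (nat \<times> nat) option) \<Rightarrow> nat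
    \<Rightarrow> (nat \<times> nat) set set" where
  "faces V bt lns c = verts V // {(u,v). u \<in> verts V \<and> v \<in> verts V \<and> (face_adj V bt lns c)\<^sup>*\<^sup>* u v}"

text \<open>A face is internal (a cycle) iff it contains no external leg; otherwise it is a path
  between two external legs.\<close>
definition F_int :: "nat \<Rightarrow> (nat \<Rightarrow> bubble) \<Rightarrow> (nat \<times> nat \<Rightarrow> (nat \<times> nat) option) \<Rightarrow> nat" where
  "F_int V bt lns = (\<Sum>c\<in>{1,2,3::nat}. card {F \<in> faces V bt lns c. F \<inter> ext_legs V lns = {}})"

definition connected_graph :: "nat \<Rightarrow> (nat \<Rightarrow> bubble) \<Rightarrow> (nat \<times> nat \<Rightarrow> (nat \<times> nat) option) \<Rightarrow> bool" where
  "connected_graph V bt lns \<longleftrightarrow>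
     (\<forall>u\<in>verts V. \<forall>v\<in>verts V. (\<lambda>x y. \<exists>c\<in>{1,2,3}. face_adj V bt lns c x y)\<^sup>*\<^sup>* u v)"

definition omega_deg :: "nat \<Rightarrow> (nat \<Rightarrow> bubble) \<Rightarrow> (nat \<times> nat \<Rightarrow> (nat \<times> nat) option) \<Rightarrow> real" where
  "omega_deg V bt lns = - (real V - 1) + real (F_int V bt lns) / 2"

end

theory Submission
  imports Defs "HOL-Library.Disjoint_Sets" "HOL-Library.Z2"
begin

(* Let L be the number of lines, so that 4 V = N_ext + 2 L. The heart of the proof is the bound
   F_int + 2 V \<le> 2 L + 2 for every connected graph with at least one external leg; it gives
   omega_deg \<le> 2 - N_ext / 2, which is at most - N_ext / 12 as soon as N_ext \<ge> 5.

   Some line endpoint b is joined by a bubble edge of a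
   colour c to a vertex carrying an external leg; cut the line at b. The colour-c face through b is
   external, so at most two internal faces are destroyed while 2 L drops by 2. If the line was a
   bridge, no internal face is destroyed at all, and the bounds for the two resulting components
   add up to the bound for the original one. *)

lemma even_card_involution:
  assumes "\<And>x. x \<in> X \<Longrightarrow> h x \<in> X" "\<And>x. x \<in> X \<Longrightarrow> h (h x) = x"
    and "\<And>x. x \<in> X \<Longrightarrow> h x \<noteq> x"
  shows "even (card X)"
proof -
  have "(\<Sum>x\<in>X. 1 :: bit) = 0"
    using sum_involution_eq_0[of X "\<lambda>_. 1 :: bit" h] assms by simp
  then show ?thesis
    using even_of_nat[of "card X", where 'a = bit] by simp
qed

lemma rtranclp_exit_step:
  assumes "r\<^sup>*\<^sup>* x y" "Q x" "\<not> Q y"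
  shows "\<exists>a b. r\<^sup>*\<^sup>* x a \<and> r a b \<and> Q a \<and> \<not> Q b"
  using assms by (induction rule: rtranclp_induct) blast+

definition pair12 :: "nat \<Rightarrow> nat" where
  "pair12 k = (if k = 1 then 2 else if k = 2 then 1 else if k = 3 then 4 else 3)"

definition pair13 :: "nat \<Rightarrow> nat" where
  "pair13 k = (if k = 1 then 3 else if k = 3 then 1 else if k = 2 then 4 else 2)"

definition pair14 :: "nat \<Rightarrow> nat" where
  "pair14 k = (if k = 1 then 4 else if k = 4 then 1 else if k = 2 then 3 else 2)"

definition bubble_partner :: "bubble \<Rightarrow> nat \<Rightarrow> nat \<Rightarrow> nat" where
  "bubble_partner b c k = (case b of
      Tetra \<Rightarrow> (if c = 1 then pair12 k else if c = 2 then pair13 k else pair14 k)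
    | Melo d \<Rightarrow> (if c = d then pair14 k else pair12 k))"

lemma bubble_partner_matching:
  assumes "k \<in> {1..4}"
  shows "bubble_partner b c k \<in> {1..4}" "bubble_partner b c k \<noteq> k"
    and "bubble_partner b c (bubble_partner b c k) = k"
proof -
  have "k = 1 \<or> k = 2 \<or> k = 3 \<or> k = 4"
    using assms by auto
  then show "bubble_partner b c k \<in> {1..4}" "bubble_partner b c k \<noteq> k"
    and "bubble_partner b c (bubble_partner b c k) = k"
    by (cases b; auto simp: bubble_partner_def pair12_def pair13_def pair14_def)+
qed

lemma bubble_edge_iff_partner:
  assumes "valid_bubble b" "c \<in> {1,2,3}" "k \<in> {1..4}" "k' \<in> {1..4}"
  shows "((k, k', c) \<in> bubble_edges b \<or> (k', k, c) \<in> bubble_edges b) \<longleftrightarrow> k' = bubble_partner b c k"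
proof (cases b)
  case Tetra
  then show ?thesis
    using assms(2-4) by (auto simp: bubble_edges_def bubble_partner_def pair12_def pair13_def pair14_def)
next
  case (Melo d)
  then have "d \<in> {1,2,3}"
    using assms(1) by (simp add: valid_bubble_def)
  then show ?thesis
    using Melo assms(2-4) by (auto simp: bubble_edges_def bubble_partner_def pair12_def pair13_def pair14_def)
qed

type_synonym lines = "nat \<times> nat \<Rightarrow> (nat \<times> nat) option"

lemma verts_eq_product: "verts V = {0..<V} \<times> {1..4}"
  by (auto simp: verts_def)

lemma finite_verts: "finite (verts V)"
  by (simp add: verts_eq_product)

lemma card_verts: "card (verts V) = 4 * V"
  by (simp add: verts_eq_product card_cartesian_product)

lemma fst_verts: "fst ` verts V = {0..<V}"
  by (force simp: verts_eq_product)

lemma face_adj_mono: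
  "l' \<subseteq>\<^sub>m l \<Longrightarrow> face_adj V bt l' c u v \<Longrightarrow> face_adj V bt l c u v"
  unfolding face_adj_def map_le_def by (metis domI)

locale bubble_graph =
  fixes V :: nat and bt :: "nat \<Rightarrow> bubble"
  assumes valid_bubbles: "\<And>i. i < V \<Longrightarrow> valid_bubble (bt i)"
begin

definition partner :: "nat \<Rightarrow> nat \<times> nat \<Rightarrow> nat \<times> nat" where
  "partner c u = (fst u, bubble_partner (bt (fst u)) c (snd u))"

definition wf_lines :: "lines \<Rightarrow> bool" where
  "wf_lines l \<longleftrightarrow> (\<forall>v w. l v = Some w \<longrightarrow> v \<in> verts V \<and> w \<in> verts V \<and> w \<noteq> v \<and> l w = Some v)"

definition graph_adj :: "lines \<Rightarrow> nat \<times> nat \<Rightarrow> nat \<times> nat \<Rightarrow> bool" where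
  "graph_adj l u v \<longleftrightarrow> (\<exists>c\<in>{1,2,3}. face_adj V bt l c u v)"

definition component :: "lines \<Rightarrow> nat \<times> nat \<Rightarrow> (nat \<times> nat) set" where
  "component l x = {y. (graph_adj l)\<^sup>*\<^sup>* x y}"

definition face :: "lines \<Rightarrow> nat \<Rightarrow> nat \<times> nat \<Rightarrow> (nat \<times> nat) set" where
  "face l c x = {y. (face_adj V bt l c)\<^sup>*\<^sup>* x y}"

definition internal_faces :: "lines \<Rightarrow> (nat \<times> nat) set \<Rightarrow> nat \<Rightarrow> nat" where
  "internal_faces l A c = card {F \<in> face l c ` A. F \<inter> ext_legs V l = {}}"

definition total_internal_faces :: "lines \<Rightarrow> (nat \<times> nat) set \<Rightarrow> nat" where
  "total_internal_faces l A = (\<Sum>c\<in>{1,2,3}. internal_faces l A c)"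

definition line_ends :: "lines \<Rightarrow> (nat \<times> nat) set \<Rightarrow> nat" where
  "line_ends l A = card {x \<in> A. l x \<noteq> None}"

lemma self_in_component: "x \<in> component l x"
  by (simp add: component_def)

lemma self_in_face: "x \<in> face l c x"
  by (simp add: face_def)

lemma wf_linesD:
  "wf_lines l \<Longrightarrow> l v = Some w \<Longrightarrow> v \<in> verts V \<and> w \<in> verts V \<and> w \<noteq> v \<and> l w = Some v"
  unfolding wf_lines_def by blast

lemma partner_matching:
  assumes "u \<in> verts V"
  shows "partner c u \<in> verts V" "partner c u \<noteq> u" "partner c (partner c u) = u"
    and "fst (partner c u) = fst u"
  using assms bubble_partner_matching[of "snd u" "bt (fst u)" c]
  by (auto simp: partner_def verts_def prod_eq_iff)

lemma face_adj_iff: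
  assumes "c \<in> {1,2,3}"
  shows "face_adj V bt l c u v \<longleftrightarrow> u \<in> verts V \<and> v \<in> verts V \<and> (v = partner c u \<or> l u = Some v)"
proof -
  have "(fst u = fst v \<and> ((snd u, snd v, c) \<in> bubble_edges (bt (fst u))
           \<or> (snd v, snd u, c) \<in> bubble_edges (bt (fst u)))) \<longleftrightarrow> v = partner c u"
    if uv: "u \<in> verts V" "v \<in> verts V"
  proof -
    obtain i k j k' where "u = (i, k)" "v = (j, k')" "i < V" "k \<in> {1..4}" "k' \<in> {1..4}"
      using uv unfolding verts_def by blast
    then show ?thesis
      using bubble_edge_iff_partner[OF valid_bubbles assms] by (auto simp: partner_def)
  qed
  then show ?thesis
    unfolding face_adj_def by blast
qed

lemma symp_face_adj:
  assumes "wf_lines l" "c \<in> {1,2,3}"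
  shows "symp (face_adj V bt l c)"
proof (rule sympI)
  fix u v assume "face_adj V bt l c u v"
  then have "u \<in> verts V" "v \<in> verts V" "v = partner c u \<or> l u = Some v"
    using face_adj_iff[OF assms(2)] by auto
  then show "face_adj V bt l c v u"
    using face_adj_iff[OF assms(2)] partner_matching wf_linesD[OF assms(1)] by metis
qed

lemma symp_graph_adj: "wf_lines l \<Longrightarrow> symp (graph_adj l)"
  using symp_face_adj unfolding graph_adj_def symp_def by blast

lemma graph_adj_verts: "graph_adj l u v \<Longrightarrow> u \<in> verts V \<and> v \<in> verts V"
  by (auto simp: graph_adj_def face_adj_def)

lemma partner_in_component:
  assumes "u \<in> verts V" "c \<in> {1,2,3}"
  shows "partner c u \<in> component l u"
proof -
  have "graph_adj l u (partner c u)"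
    using assms partner_matching(1) by (auto simp: graph_adj_def face_adj_iff)
  then show ?thesis
    by (simp add: component_def)
qed

lemma line_in_component:
  assumes "wf_lines l" "l u = Some v"
  shows "v \<in> component l u"
proof -
  have "face_adj V bt l 1 u v"
    using assms wf_linesD[OF assms] by (simp add: face_adj_iff)
  then have "graph_adj l u v"
    by (auto simp: graph_adj_def)
  then show ?thesis
    by (simp add: component_def)
qed

lemma line_in_face:
  assumes "wf_lines l" "l u = Some v" "c \<in> {1,2,3}"
  shows "v \<in> face l c u"
proof -
  have "face_adj V bt l c u v"
    using assms wf_linesD[OF assms(1,2)] by (simp add: face_adj_iff)
  then show ?thesis
    by (simp add: face_def)
qed

lemma component_subset_verts: "x \<in> verts V \<Longrightarrow> component l x \<subseteq> verts V"
  unfolding component_def using graph_adj_verts by (auto elim: rtranclp.cases)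

lemma component_eq:
  assumes "wf_lines l" "y \<in> component l x"
  shows "component l y = component l x"
proof -
  have xy: "(graph_adj l)\<^sup>*\<^sup>* x y"
    using assms(2) by (simp add: component_def)
  then have "(graph_adj l)\<^sup>*\<^sup>* y x"
    by (rule sympD[OF symp_rtranclp[OF symp_graph_adj[OF assms(1)]]])
  then show ?thesis
    using xy unfolding component_def by (blast intro: rtranclp_trans)
qed

lemma face_eq:
  assumes "wf_lines l" "c \<in> {1,2,3}" "y \<in> face l c x"
  shows "face l c y = face l c x"
proof -
  have xy: "(face_adj V bt l c)\<^sup>*\<^sup>* x y"
    using assms(3) by (simp add: face_def)
  then have "(face_adj V bt l c)\<^sup>*\<^sup>* y x"
    by (rule sympD[OF symp_rtranclp[OF symp_face_adj[OF assms(1,2)]]])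
  then show ?thesis
    using xy unfolding face_def by (blast intro: rtranclp_trans)
qed

lemma face_subset_component:
  assumes "c \<in> {1,2,3}"
  shows "face l c x \<subseteq> component l x"
proof -
  have "(face_adj V bt l c)\<^sup>*\<^sup>* x y \<longrightarrow> (graph_adj l)\<^sup>*\<^sup>* x y" for y
    by (rule mono_rtranclp) (use assms in \<open>auto simp: graph_adj_def\<close>)
  then show ?thesis
    unfolding face_def component_def by blast
qed

lemma face_mono:
  assumes "l' \<subseteq>\<^sub>m l"
  shows "face l' c x \<subseteq> face l c x"
proof -
  have "(face_adj V bt l' c)\<^sup>*\<^sup>* x y \<longrightarrow> (face_adj V bt l c)\<^sup>*\<^sup>* x y" for y
    using face_adj_mono[OF assms] by (intro mono_rtranclp) blast
  then show ?thesis
    unfolding face_def by blast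
qed

lemma component_mono:
  assumes "l' \<subseteq>\<^sub>m l"
  shows "component l' x \<subseteq> component l x"
proof -
  have "graph_adj l' u v \<longrightarrow> graph_adj l u v" for u v
    using face_adj_mono[OF assms] unfolding graph_adj_def by blast
  then have "(graph_adj l')\<^sup>*\<^sup>* x y \<longrightarrow> (graph_adj l)\<^sup>*\<^sup>* x y" for y
    by (rule mono_rtranclp)
  then show ?thesis
    unfolding component_def by blast
qed

lemma bubble_in_component:
  assumes "wf_lines l" "u \<in> verts V" "v \<in> verts V" "fst u = fst v"
  shows "v \<in> component l u"
proof -
  obtain i where i: "i < V" "fst u = i"
    using assms(2) by (auto simp: verts_def)
  have "(i, k) \<in> component l (i, 1)" if "k \<in> {1..4}" for k
  proof -
    have i1: "(i, 1) \<in> verts V" "(i, 2) \<in> verts V"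
      using i by (auto simp: verts_def)
    have k: "k = 1 \<or> k = 2 \<or> k = 3 \<or> k = 4"
      using that by auto
    show ?thesis
    proof (cases "bt i")
      case Tetra
      then have "partner 1 (i, 1) = (i, 2)" "partner 2 (i, 1) = (i, 3)" "partner 3 (i, 1) = (i, 4)"
        by (auto simp: partner_def bubble_partner_def pair12_def pair13_def pair14_def)
      then show ?thesis
        using k partner_in_component[OF i1(1), of _ l] self_in_component[of "(i, 1)" l] by fastforce
    next
      case (Melo d)
      have d: "d \<in> {1,2,3}"
        using valid_bubbles[OF i(1)] Melo by (simp add: valid_bubble_def)
      define e where "e = (if d = 1 then 2 else 1 :: nat)"
      have e: "e \<in> {1,2,3}" "e \<noteq> d"
        by (auto simp: e_def)
      have "partner e (i, 1) = (i, 2)" "partner d (i, 1) = (i, 4)" "partner d (i, 2) = (i, 3)"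
        using Melo e by (auto simp: partner_def bubble_partner_def pair12_def pair14_def)
      moreover have "(i, 2) \<in> component l (i, 1)"
        using partner_in_component[OF i1(1) e(1)] \<open>partner e (i, 1) = (i, 2)\<close> by simp
      ultimately show ?thesis
        using k partner_in_component[OF i1(1) d] partner_in_component[OF i1(2) d]
          component_eq[OF assms(1)] self_in_component[of "(i, 1)" l] by metis
    qed
  qed
  moreover have "u \<in> component l (i, 1)" "v \<in> component l (i, 1)"
    using calculation assms(2-4) i by (auto simp: verts_def)
  ultimately show ?thesis
    using component_eq[OF assms(1)] by metis
qed

lemma finite_component: "x \<in> verts V \<Longrightarrow> finite (component l x)"
  using component_subset_verts finite_verts by (rule finite_subset)

lemma wf_lines_remove_line:
  assumes "wf_lines l" "l b = Some b'"
  shows "wf_lines (l(b := None, b' := None))"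
  unfolding wf_lines_def
proof (intro allI impI)
  fix v w assume vw: "(l(b := None, b' := None)) v = Some w"
  then have v: "v \<noteq> b" "v \<noteq> b'" "l v = Some w"
    by (auto split: if_splits)
  have "l b' = Some b"
    using wf_linesD[OF assms] by blast
  then have "w \<noteq> b" "w \<noteq> b'"
    using v wf_linesD[OF assms(1) v(3)] assms(2) by auto
  then show "v \<in> verts V \<and> w \<in> verts V \<and> w \<noteq> v \<and> (l(b := None, b' := None)) w = Some v"
    using v wf_linesD[OF assms(1) v(3)] by simp
qed

lemma remove_line_le: "l(b := None, b' := None) \<subseteq>\<^sub>m l"
  by (auto simp: map_le_def)

lemma line_ends_remove_line:
  assumes "wf_lines l" "l b = Some b'" "b \<in> A" "b' \<in> A" "finite A"
  shows "line_ends l A = line_ends (l(b := None, b' := None)) A + 2"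
proof -
  let ?E = "{x \<in> A. l x \<noteq> None}"
  have removed: "{x \<in> A. (l(b := None, b' := None)) x \<noteq> None} = ?E - {b, b'}"
    by auto
  have sub: "{b, b'} \<subseteq> ?E" and two: "card {b, b'} = 2"
    using assms wf_linesD[OF assms(1,2)] by auto
  have "card (?E - {b, b'}) = card ?E - 2"
    using card_Diff_subset[OF _ sub] two by simp
  moreover have "2 \<le> card ?E"
    using card_mono[OF _ sub] two assms(5) by simp
  ultimately show ?thesis
    unfolding line_ends_def removed by simp
qed

lemma line_ends_Un:
  "finite A \<Longrightarrow> finite B \<Longrightarrow> A \<inter> B = {} \<Longrightarrow> line_ends l (A \<union> B) = line_ends l A + line_ends l B"
  unfolding line_ends_def by (subst card_Un_disjoint[symmetric]) (auto intro: arg_cong[where f = card])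

lemma line_end_notin_face:
  assumes "wf_lines l" "l b = Some b'" "c \<in> {1,2,3}" "b \<notin> face l c x"
  shows "b' \<notin> face l c x"
proof
  assume "b' \<in> face l c x"
  then have "face l c b' = face l c x"
    by (rule face_eq[OF assms(1,3)])
  moreover have "b \<in> face l c b'"
    using line_in_face[OF assms(1) _ assms(3)] wf_linesD[OF assms(1,2)] by blast
  ultimately show False
    using assms(4) by simp
qed

lemma face_remove_line_eq:
  assumes "wf_lines l" "l b = Some b'" "c \<in> {1,2,3}" "b \<notin> face l c x"
  shows "face (l(b := None, b' := None)) c x = face l c x"
proof
  show "face (l(b := None, b' := None)) c x \<subseteq> face l c x"
    by (rule face_mono[OF remove_line_le])
  have "b' \<notin> face l c x"
    using line_end_notin_face[OF assms] .
  show "face l c x \<subseteq> face (l(b := None, b' := None)) c x"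
  proof
    fix z assume "z \<in> face l c x"
    then have "(face_adj V bt l c)\<^sup>*\<^sup>* x z"
      by (simp add: face_def)
    then show "z \<in> face (l(b := None, b' := None)) c x"
    proof (induction rule: rtranclp_induct)
      case base
      then show ?case
        by (simp add: face_def)
    next
      case (step y z)
      then have "y \<noteq> b" "y \<noteq> b'"
        using assms(4) \<open>b' \<notin> face l c x\<close> by (auto simp: face_def)
      then have "face_adj V bt (l(b := None, b' := None)) c y z"
        using step(2) assms(3) by (simp add: face_adj_iff)
      with step(3) show ?case
        unfolding face_def mem_Collect_eq by (rule rtranclp.rtrancl_into_rtrancl)
    qed
  qed
qed

lemma internal_faces_remove_line:
  assumes "wf_lines l" "l b = Some b'" "c \<in> {1,2,3}" "finite A"
  shows "internal_faces l A c
    \<le> internal_faces (l(b := None, b' := None)) A c + (if face l c b \<inter> ext_legs V l = {} then 1 else 0)"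
proof -
  let ?l' = "l(b := None, b' := None)"
  let ?I = "{F \<in> face l c ` A. F \<inter> ext_legs V l = {}}"
  let ?I' = "{F \<in> face ?l' c ` A. F \<inter> ext_legs V ?l' = {}}"
  have "?I - {face l c b} \<subseteq> ?I'"
  proof
    fix F assume F: "F \<in> ?I - {face l c b}"
    then obtain x where x: "x \<in> A" "F = face l c x"
      by blast
    have "b \<notin> F"
      using F x face_eq[OF assms(1,3)] by blast
    then have "face ?l' c x = F" "b' \<notin> F"
      using face_remove_line_eq[OF assms(1-3)] line_end_notin_face[OF assms(1-3)] x by simp_all
    moreover have "F \<inter> ext_legs V ?l' = {}"
      using F \<open>b \<notin> F\<close> \<open>b' \<notin> F\<close> by (auto simp: ext_legs_def)
    ultimately show "F \<in> ?I'"
      using x by blast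
  qed
  then have "card (?I - {face l c b}) \<le> card ?I'"
    using assms(4) by (intro card_mono) auto
  moreover have "card ?I \<le> card (?I - {face l c b}) + (if face l c b \<inter> ext_legs V l = {} then 1 else 0)"
    using assms(4) by (auto simp: card_Diff_singleton_if)
  ultimately show ?thesis
    unfolding internal_faces_def by linarith
qed

(* The part S of the face of b that survives the cut is closed under colour-c edges, so card S is
   even; if the face had no external leg, the lines would pair off S - {b} as well. *)
lemma bridge_faces_external:
  assumes "wf_lines l" "l b = Some b'" "c \<in> {1,2,3}"
    and "b' \<notin> component (l(b := None, b' := None)) b"
  shows "face l c b \<inter> ext_legs V l \<noteq> {}"
proof
  assume internal: "face l c b \<inter> ext_legs V l = {}"
  let ?l' = "l(b := None, b' := None)"
  let ?S = "face ?l' c b"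
  have b: "b \<in> verts V" "b' \<notin> ?S" "b \<in> ?S"
    using wf_linesD[OF assms(1,2)] assms(4) face_subset_component[OF assms(3), of ?l' b]
    by (auto simp: face_def)
  have S_sub: "?S \<subseteq> face l c b"
    by (rule face_mono[OF remove_line_le])
  have S_verts: "?S \<subseteq> verts V"
    using face_subset_component[OF assms(3)] component_subset_verts[OF b(1)] by blast
  then have fin: "finite ?S"
    using finite_verts finite_subset by blast
  have closed: "y \<in> ?S" if "x \<in> ?S" "face_adj V bt ?l' c x y" for x y
    using that by (auto simp: face_def intro: rtranclp.rtrancl_into_rtrancl)
  have "even (card ?S)"
  proof (rule even_card_involution[where h = "partner c"])
    fix x assume x: "x \<in> ?S"
    then have "x \<in> verts V"
      using S_verts by blast
    then show "partner c x \<in> ?S" "partner c (partner c x) = x" "partner c x \<noteq> x"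
      using closed[OF x] partner_matching assms(3) by (auto simp: face_adj_iff)
  qed
  moreover have "even (card (?S - {b}))"
  proof (rule even_card_involution[where h = "\<lambda>x. the (l x)"])
    fix x assume x: "x \<in> ?S - {b}"
    then have "x \<in> verts V" "x \<noteq> b'" "x \<notin> ext_legs V l"
      using S_verts S_sub internal b by auto
    then obtain y where y: "l x = Some y"
      by (auto simp: ext_legs_def)
    have "face_adj V bt ?l' c x y"
      using x \<open>x \<noteq> b'\<close> y wf_linesD[OF assms(1) y] assms(3) by (simp add: face_adj_iff)
    then have "y \<in> ?S"
      using closed[of x y] x by blast
    moreover have "y \<noteq> b"
      using \<open>x \<noteq> b'\<close> y wf_linesD[OF assms(1) y] assms(2) by auto
    ultimately show "the (l x) \<in> ?S - {b}" "the (l (the (l x))) = x" "the (l x) \<noteq> x"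
      using y wf_linesD[OF assms(1) y] by auto
  qed
  moreover have "card ?S = card (?S - {b}) + 1"
    using card_Suc_Diff1[OF fin b(3)] by simp
  ultimately show False
    by simp
qed

lemma component_remove_line:
  assumes "wf_lines l" "l b = Some b'"
  shows "component l b = component (l(b := None, b' := None)) b \<union> component (l(b := None, b' := None)) b'"
proof
  let ?l' = "l(b := None, b' := None)"
  have "component ?l' b' \<subseteq> component l b'"
    by (rule component_mono[OF remove_line_le])
  also have "\<dots> = component l b"
    using component_eq[OF assms(1) line_in_component[OF assms]] .
  finally show "component ?l' b \<union> component ?l' b' \<subseteq> component l b"
    using component_mono[OF remove_line_le] by blast
  show "component l b \<subseteq> component ?l' b \<union> component ?l' b'"
  proof
    fix z assume "z \<in> component l b"
    then have "(graph_adj l)\<^sup>*\<^sup>* b z"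
      by (simp add: component_def)
    then show "z \<in> component ?l' b \<union> component ?l' b'"
    proof (induction rule: rtranclp_induct)
      case base
      then show ?case
        using self_in_component by blast
    next
      case (step y z)
      show ?case
      proof (cases "graph_adj ?l' y z")
        case True
        with step(3) show ?thesis
          unfolding component_def by (blast intro: rtranclp.rtrancl_into_rtrancl)
      next
        case False
        then have "l y = Some z" "y \<in> {b, b'}"
          using step(2) by (auto simp: graph_adj_def face_adj_iff split: if_splits)
        then have "z \<in> {b, b'}"
          using assms(2) wf_linesD[OF assms] by auto
        then show ?thesis
          using self_in_component by blast
      qed
    qed
  qed
qed

lemma total_internal_faces_Un:
  assumes "wf_lines l" "x \<in> verts V" "y \<in> verts V" "component l x \<inter> component l y = {}"
  shows "total_internal_faces l (component l x \<union> component l y)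
    = total_internal_faces l (component l x) + total_internal_faces l (component l y)"
proof -
  have "internal_faces l (component l x \<union> component l y) c
      = internal_faces l (component l x) c + internal_faces l (component l y) c"
    if c: "c \<in> {1,2,3}" for c
  proof -
    have face_in: "face l c u \<subseteq> component l z" if "u \<in> component l z" for u z
      using face_subset_component[OF c] component_eq[OF assms(1) that] by blast
    have "face l c ` component l x \<inter> face l c ` component l y = {}"
    proof (rule ccontr)
      assume "face l c ` component l x \<inter> face l c ` component l y \<noteq> {}"
      then obtain u w where "u \<in> component l x" "w \<in> component l y" "face l c u = face l c w"
        by blast
      then show False
        using face_in[of u x] face_in[of w y] assms(4) self_in_face[of u l c] by blast
    qed
    moreover have "finite (component l x)" "finite (component l y)"
      using finite_component assms(2,3) by auto
    ultimately show ?thesis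
      unfolding internal_faces_def image_Un by (subst card_Un_disjoint[symmetric]) (auto intro: arg_cong[where f = card])
  qed
  then show ?thesis
    unfolding total_internal_faces_def by (simp add: sum.distrib)
qed

lemma card_fst_component_Un:
  assumes "wf_lines l" "x \<in> verts V" "y \<in> verts V" "component l x \<inter> component l y = {}"
  shows "card (fst ` (component l x \<union> component l y))
    = card (fst ` component l x) + card (fst ` component l y)"
proof -
  have "fst ` component l x \<inter> fst ` component l y = {}"
  proof (rule ccontr)
    assume "fst ` component l x \<inter> fst ` component l y \<noteq> {}"
    then obtain u w where uw: "u \<in> component l x" "w \<in> component l y" "fst u = fst w"
      by auto
    then have "w \<in> component l u"
      using bubble_in_component[OF assms(1)] component_subset_verts assms(2,3) by blast
    then show False
      using uw assms(4) component_eq[OF assms(1) uw(1)] by blast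
  qed
  then show ?thesis
    using finite_component assms(2,3) by (simp add: image_Un card_Un_disjoint)
qed

lemma fst_component_without_lines:
  assumes "x \<in> verts V" "\<forall>y\<in>component l x. l y = None"
  shows "fst ` component l x = {fst x}"
proof -
  have "fst y = fst x" if "(graph_adj l)\<^sup>*\<^sup>* x y" for y
    using that
  proof (induction rule: rtranclp_induct)
    case base
    then show ?case
      by simp
  next
    case (step y z)
    have "l y = None"
      using assms(2) step(1) unfolding component_def by blast
    then obtain c where "c \<in> {1,2,3}" "y \<in> verts V" "z = partner c y"
      using step(2) by (auto simp: graph_adj_def face_adj_iff)
    then show ?case
      using step(3) partner_matching(4) by simp
  qed
  then have "fst ` component l x \<subseteq> {fst x}"
    unfolding component_def by blast
  moreover have "fst x \<in> fst ` component l x"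
    using self_in_component by blast
  ultimately show ?thesis
    by blast
qed

lemma total_internal_faces_eq_0:
  assumes "A \<subseteq> ext_legs V l"
  shows "total_internal_faces l A = 0"
proof -
  have "{F \<in> face l c ` A. F \<inter> ext_legs V l = {}} = {}" for c
    using assms self_in_face by blast
  then have "internal_faces l A c = 0" for c
    unfolding internal_faces_def by (metis card.empty)
  then show ?thesis
    by (simp add: total_internal_faces_def)
qed

lemma line_next_to_leg:
  assumes "wf_lines l" "x \<in> verts V" "\<exists>y\<in>component l x. l y = None"
    and "\<exists>y\<in>component l x. l y \<noteq> None"
  obtains b b' c where "b \<in> component l x" "l b = Some b'" "c \<in> {1,2,3}"
    and "face l c b \<inter> ext_legs V l \<noteq> {}"
proof -
  obtain x0 y where x0: "x0 \<in> component l x" "l x0 = None" and y: "y \<in> component l x" "l y \<noteq> None"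
    using assms(3,4) by blast
  have "y \<in> component l x0"
    using component_eq[OF assms(1) x0(1)] y(1) by simp
  then obtain a b where a: "(graph_adj l)\<^sup>*\<^sup>* x0 a" "graph_adj l a b" "l a = None" "l b \<noteq> None"
    using rtranclp_exit_step[of "graph_adj l" x0 y "\<lambda>z. l z = None"] x0(2) y(2)
    by (auto simp: component_def)
  then obtain c where c: "c \<in> {1,2,3}" "a \<in> verts V" "b = partner c a"
    by (auto simp: graph_adj_def face_adj_iff)
  have "a \<in> component l x0"
    using a(1) by (simp add: component_def)
  then have "b \<in> component l x"
    using component_eq[OF assms(1)] x0(1) partner_in_component[OF c(2,1)] c(3) by metis
  moreover have "a \<in> face l c b \<inter> ext_legs V l"
    using a(3) c partner_matching(1,3)[OF c(2)] by (auto simp: face_def face_adj_iff ext_legs_def)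
  ultimately show ?thesis
    using that a(4) c(1) by blast
qed

lemma total_internal_faces_remove_line:
  assumes "wf_lines l" "l b = Some b'" "finite A" "c \<in> {1,2,3}" "face l c b \<inter> ext_legs V l \<noteq> {}"
  shows "total_internal_faces l A \<le> total_internal_faces (l(b := None, b' := None)) A + 2"
proof -
  let ?l' = "l(b := None, b' := None)"
  have "internal_faces l A d \<le> internal_faces ?l' A d + (if d = c then 0 else 1)" if "d \<in> {1,2,3}" for d
    using internal_faces_remove_line[OF assms(1,2) that assms(3)] assms(5)
    by (cases "d = c") (simp_all split: if_splits)
  then have "total_internal_faces l A \<le> (\<Sum>d\<in>{1,2,3}. internal_faces ?l' A d + (if d = c then 0 else 1))"
    unfolding total_internal_faces_def by (rule sum_mono)
  also have "\<dots> = total_internal_faces ?l' A + 2"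
    using assms(4) by (auto simp: total_internal_faces_def sum.distrib)
  finally show ?thesis .
qed

lemma total_internal_faces_remove_bridge:
  assumes "wf_lines l" "l b = Some b'" "finite A" "b' \<notin> component (l(b := None, b' := None)) b"
  shows "total_internal_faces l A \<le> total_internal_faces (l(b := None, b' := None)) A"
  unfolding total_internal_faces_def
  using internal_faces_remove_line[OF assms(1,2) _ assms(3)] bridge_faces_external[OF assms(1,2) _ assms(4)]
  by (intro sum_mono) fastforce

lemma component_bound_without_lines:
  assumes "x \<in> verts V" "\<forall>y\<in>component l x. l y = None"
  shows "total_internal_faces l (component l x) + 2 * card (fst ` component l x)
    \<le> line_ends l (component l x) + 2"
proof -
  have "{y \<in> component l x. l y \<noteq> None} = {}"
    using assms(2) by force
  then have "line_ends l (component l x) = 0"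
    unfolding line_ends_def by (metis card.empty)
  moreover have "component l x \<subseteq> ext_legs V l"
    using assms component_subset_verts[OF assms(1), of l] unfolding ext_legs_def by blast
  ultimately show ?thesis
    using fst_component_without_lines[OF assms] total_internal_faces_eq_0 by simp
qed

lemma component_bound:
  assumes "wf_lines l" "x \<in> verts V" "\<exists>y\<in>component l x. l y = None"
  shows "total_internal_faces l (component l x) + 2 * card (fst ` component l x)
    \<le> line_ends l (component l x) + 2"
  using assms
proof (induction "line_ends l (component l x)" arbitrary: l x rule: less_induct)
  case less
  note wf = less.prems(1) and x = less.prems(2)
  let ?A = "component l x"
  show ?case
  proof (cases "\<exists>y\<in>?A. l y \<noteq> None")
    case False
    then show ?thesis
      using component_bound_without_lines[OF x] by blast
  next
    case True
    then obtain b b' c where b: "b \<in> ?A" "l b = Some b'" "c \<in> {1,2,3}"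
      and external: "face l c b \<inter> ext_legs V l \<noteq> {}"
      using line_next_to_leg[OF wf x less.prems(3)] by metis
    define l' where "l' = l(b := None, b' := None)"
    have fin: "finite ?A"
      using finite_component[OF x] .
    have A_b: "?A = component l b"
      using component_eq[OF wf b(1)] by simp
    have wf': "wf_lines l'" and b_verts: "b \<in> verts V" "b' \<in> verts V"
      using wf_lines_remove_line[OF wf b(2)] wf_linesD[OF wf b(2)] by (auto simp: l'_def)
    have ends: "line_ends l ?A = line_ends l' ?A + 2"
      unfolding l'_def using line_ends_remove_line[OF wf b(2) _ _ fin] A_b
        self_in_component line_in_component[OF wf b(2)] by auto
    have IH: "total_internal_faces l' (component l' y) + 2 * card (fst ` component l' y)
        \<le> line_ends l' (component l' y) + 2"
      if y: "y \<in> {b, b'}" and le: "line_ends l' (component l' y) \<le> line_ends l' ?A" for y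
    proof (rule less.hyps)
      show "line_ends l' (component l' y) < line_ends l ?A"
        using le ends by simp
      have "l' y = None"
        using y by (auto simp: l'_def)
      then show "\<exists>z\<in>component l' y. l' z = None"
        using self_in_component by blast
    qed (use wf' y b_verts in auto)
    show ?thesis
    proof (cases "b' \<in> component l' b")
      case True
      then have "component l' b = ?A"
        using A_b component_remove_line[OF wf b(2)] component_eq[OF wf'] by (auto simp: l'_def)
      then show ?thesis
        using IH[of b] ends total_internal_faces_remove_line[OF wf b(2) fin b(3) external]
        by (simp add: l'_def)
    next
      case False
      let ?B = "component l' b" and ?B' = "component l' b'"
      have split: "?A = ?B \<union> ?B'"
        using A_b component_remove_line[OF wf b(2)] by (simp add: l'_def)
      have disj: "?B \<inter> ?B' = {}"
        using False component_eq[OF wf'] self_in_component by blast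
      have ends': "line_ends l' ?A = line_ends l' ?B + line_ends l' ?B'"
        using split disj finite_component b_verts line_ends_Un by simp
      have "total_internal_faces l ?A \<le> total_internal_faces l' ?B + total_internal_faces l' ?B'"
        using total_internal_faces_remove_bridge[OF wf b(2) fin] False
          total_internal_faces_Un[OF wf' b_verts disj] split by (simp add: l'_def)
      moreover have "card (fst ` ?A) = card (fst ` ?B) + card (fst ` ?B')"
        using card_fst_component_Un[OF wf' b_verts disj] split by simp
      ultimately show ?thesis
        using IH[of b] IH[of b'] ends ends' by simp
    qed
  qed
qed

lemma faces_eq_face_image:
  assumes "c \<in> {1,2,3}"
  shows "faces V bt l c = face l c ` verts V"
proof -
  let ?R = "{(u, v). u \<in> verts V \<and> v \<in> verts V \<and> (face_adj V bt l c)\<^sup>*\<^sup>* u v}"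
  have "?R `` {x} = face l c x" if "x \<in> verts V" for x
    using face_subset_component[OF assms, of l x] component_subset_verts[OF that, of l] that
    by (auto simp: face_def)
  then show ?thesis
    unfolding faces_def quotient_def by auto
qed

lemma F_int_eq_total_internal_faces: "F_int V bt l = total_internal_faces l (verts V)"
  unfolding F_int_def total_internal_faces_def internal_faces_def
  by (intro sum.cong refl) (simp add: faces_eq_face_image)

lemma N_ext_add_line_ends: "N_ext V l + line_ends l (verts V) = 4 * V"
proof -
  have "verts V = ext_legs V l \<union> {x \<in> verts V. l x \<noteq> None}"
    "ext_legs V l \<inter> {x \<in> verts V. l x \<noteq> None} = {}"
    unfolding ext_legs_def by blast+
  then have "card (verts V) = card (ext_legs V l) + card {x \<in> verts V. l x \<noteq> None}"
    using finite_verts by (metis card_Un_disjoint finite_Un)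
  then show ?thesis
    unfolding N_ext_def line_ends_def card_verts by simp
qed

lemma component_eq_verts:
  assumes "connected_graph V bt l" "x \<in> verts V"
  shows "component l x = verts V"
proof -
  have "(\<lambda>u v. \<exists>c\<in>{1,2,3}. face_adj V bt l c u v) = graph_adj l"
    by (intro ext) (simp add: graph_adj_def)
  then have "verts V \<subseteq> component l x"
    using assms unfolding connected_graph_def component_def by auto
  then show ?thesis
    using component_subset_verts[OF assms(2)] by blast
qed

lemma F_int_bound:
  assumes "wf_lines l" "connected_graph V bt l" "ext_legs V l \<noteq> {}"
  shows "F_int V bt l + 2 * V \<le> line_ends l (verts V) + 2"
proof -
  obtain x0 where x0: "x0 \<in> verts V" "l x0 = None"
    using assms(3) unfolding ext_legs_def by blast
  then show ?thesis
    using component_bound[OF assms(1) x0(1)] component_eq_verts[OF assms(2) x0(1)]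
    by (simp add: F_int_eq_total_internal_faces fst_verts bexI[of _ x0])
qed

end

theorem lemma1:
  fixes V :: nat and bt :: "nat \<Rightarrow> bubble" and lns :: "nat \<times> nat \<Rightarrow> (nat \<times> nat) option"
  assumes "wf_graph V bt lns"
    and "connected_graph V bt lns"
    and "N_ext V lns \<ge> 6"
  shows "omega_deg V bt lns \<le> - real (N_ext V lns) / 12"
proof -
  have "\<And>i. i < V \<Longrightarrow> valid_bubble (bt i)"
    using assms(1) unfolding wf_graph_def by blast
  then interpret bubble_graph V bt
    by unfold_locales
  have "wf_lines lns"
    using assms(1) unfolding wf_graph_def wf_lines_def by blast
  moreover have "ext_legs V lns \<noteq> {}"
    using assms(3) by (auto simp: N_ext_def)
  ultimately have "F_int V bt lns + 2 * V \<le> line_ends lns (verts V) + 2"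
    using F_int_bound assms(2) by blast
  then have "real (F_int V bt lns) + 2 * real V \<le> real (line_ends lns (verts V)) + 2"
    by (metis of_nat_add of_nat_le_iff of_nat_mult of_nat_numeral)
  moreover have "real (N_ext V lns) + real (line_ends lns (verts V)) = 4 * real V"
    using N_ext_add_line_ends by (metis of_nat_add of_nat_mult of_nat_numeral)
  ultimately show ?thesis
    using assms(3) unfolding omega_deg_def by linarith
qed

end
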